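(* Consider the stochastic extra-point scheme with fixed non-negative parameters $\alpha,\beta,\gamma,\eta,\tau$: starting from $z^0\in\mathcal Z$ with $z^{-1}:=z^0$ and $\hat F(z^{-1}):=\hat F(z^0)$, for $k=0,1,2,\dots$ $$z^{k+0.5}=P_{\mathcal Z}\big(z^k+\beta(z^k-z^{k-1})-\eta\hat F(z^k)\big),$$ $$z^{k+1}=P_{\mathcal Z}\big(z^k-\alpha\hat F(z^{k+0.5})+\gamma(z^k-z^{k-1})-\tau(\hat F(z^k)-\hat F(z^{k-1}))\big).$$ Then for every $k\ge 0$, $$(1-4|\gamma-\beta|-\tau L)\,d_{k+1}\le (1+4\gamma+6|\gamma-\beta|+4\tau L-\alpha\mu)\,d_k+(2|\gamma-\beta|+2\gamma+4\tau L)\,d_{k-1}$$ $$\qquad+(2\alpha^2L^2+2|\gamma-\beta|+2\gamma+2\alpha\mu-1)\,\mathbb E\big[\|z^{k+0.5}-z^k\|^2\big]+8\Big(\alpha^2+\frac{\tau}{L}\Big)\sigma^2+2\alpha\delta D+2(\eta-\alpha)\,\mathbb E\big[(z^{k+1}-z^{k+0.5})^\top\hat F(z^k)\big],$$ where $d_j:=\mathbb E[\|z^j-z^*\|^2]$ (so $d_{-1}=d_0=\|z^0-z^*\|^2$).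
   Context: Let $\mathcal Z\subseteq\mathbb R^n$ be a nonempty closed convex set with $\|z-z'\|\le D$ for all $z,z'\in\mathcal Z$. Let $F:\mathcal Z\to\mathbb R^n$ satisfy $(F(z)-F(z'))^\top(z-z')\ge\mu\|z-z'\|^2$ and $\|F(z)-F(z')\|\le L\|z-z'\|$ for all $z,z'\in\mathcal Z$, where $0<\mu\le L$; write $\kappa=L/\mu$. Let $z^*$ be the unique point of $\mathcal Z$ with $F(z^* )^\top(z-z^* )\ge 0$ for all $z\in\mathcal Z$. $P_{\mathcal Z}$ denotes Euclidean projection onto $\mathcal Z$. A stochastic oracle returns $\hat F(z,\xi)$ for a random sample $\xi$, and satisfies, for every $z\in\mathcal Z$, $\mathbb E_\xi\|\hat F(z,\xi)-F(z)\|\le\delta$ and $\mathbb E_\xi\|\hat F(z,\xi)-F(z)\|^2\le\sigma^2$ for constants $\delta,\sigma\ge0$. In the algorithms each oracle call $\hat F(z^j)$ (for $j$ an integer or half-integer) means $\hat F(z^j,\xi^j)$ with a fresh sample $\xi^j$ independent of all previously drawn samples (hence of $z^j$). *)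

theory Defs
  imports "HOL-Probability.Probability"
begin

text \<open>A sample path is omega :: nat => 's; the sample
 omega (2*k) is used for the oracle call at z^k and omega (2*k+1) for the call at z^(k+0.5).
 The value of the oracle at z^(k-1) used in iteration k is the one computed in iteration k-1
 (sample omega (2*(k-1))); for k = 0 it is the oracle value at z^0 (sample omega 0).\<close>

definition sep_prev_idx :: "nat \<Rightarrow> nat" where
  "sep_prev_idx k = (if k = 0 then 0 else 2 * (k - 1))"

text \<open>sep_iter ... k = (z^k, z^(k-1)), with z^(-1) = z^0.\<close>
fun sep_iter :: "'a::euclidean_space set \<Rightarrow> ('a \<Rightarrow> 's \<Rightarrow> 'a) \<Rightarrow> real \<Rightarrow> real \<Rightarrow> real \<Rightarrow> real \<Rightarrow> real
    \<Rightarrow> 'a \<Rightarrow> (nat \<Rightarrow> 's) \<Rightarrow> nat \<Rightarrow> 'a \<times> 'a" where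
  "sep_iter Z Fh \<alpha> \<beta> \<gamma> \<eta> \<tau> z0 \<omega> 0 = (z0, z0)"
| "sep_iter Z Fh \<alpha> \<beta> \<gamma> \<eta> \<tau> z0 \<omega> (Suc k) =
     (let (z, zp) = sep_iter Z Fh \<alpha> \<beta> \<gamma> \<eta> \<tau> z0 \<omega> k;
          gk = Fh z (\<omega> (2 * k));
          gp = Fh zp (\<omega> (sep_prev_idx k));
          zh = closest_point Z (z + \<beta> *\<^sub>R (z - zp) - \<eta> *\<^sub>R gk)
      in (closest_point Z (z - \<alpha> *\<^sub>R Fh zh (\<omega> (2 * k + 1)) + \<gamma> *\<^sub>R (z - zp)
                            - \<tau> *\<^sub>R (gk - gp)), z))"

definition sep_z where
  "sep_z Z Fh \<alpha> \<beta> \<gamma> \<eta> \<tau> z0 \<omega> k = fst (sep_iter Z Fh \<alpha> \<beta> \<gamma> \<eta> \<tau> z0 \<omega> k)"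

definition sep_zprev where
  "sep_zprev Z Fh \<alpha> \<beta> \<gamma> \<eta> \<tau> z0 \<omega> k = snd (sep_iter Z Fh \<alpha> \<beta> \<gamma> \<eta> \<tau> z0 \<omega> k)"

definition sep_zhalf where
  "sep_zhalf Z Fh \<alpha> \<beta> \<gamma> \<eta> \<tau> z0 \<omega> k =
     (let z = sep_z Z Fh \<alpha> \<beta> \<gamma> \<eta> \<tau> z0 \<omega> k; zp = sep_zprev Z Fh \<alpha> \<beta> \<gamma> \<eta> \<tau> z0 \<omega> k
      in closest_point Z (z + \<beta> *\<^sub>R (z - zp) - \<eta> *\<^sub>R Fh z (\<omega> (2 * k))))"

end

theory Submission
  imports Defs
begin

text \<open>
  Pathwise, the projection inequalities defining z(k+0.5) and z(k+1), tested against z(k+1) and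
  z*, bound the squared distance of z(k+1) to z* by that of z(k), minus the squared length of the
  extra-point step, plus cross terms. Strong monotonicity at z*, Lipschitz continuity and Young's
  inequality turn every cross term into squared distances and sampling errors F^ - F. In
  expectation, every sampling error is taken at a fresh sample, independent of the query point, so
  its moments are bounded by sigma^2 and delta; the bias is only needed in the form
  E |F^ - F| <= delta, combined with the diameter bound D.
\<close>

section \<open>Elementary inequalities in inner product spaces\<close>

lemma inner_le_Young:
  fixes x y :: "'a::real_inner"
  assumes "0 < c"
  shows "2 * (x \<bullet> y) \<le> c * (norm x)\<^sup>2 + (norm y)\<^sup>2 / c"
proof -
  have "0 \<le> (norm (c *\<^sub>R x - y))\<^sup>2 / c"
    using assms by simp
  also have "\<dots> = c * (norm x)\<^sup>2 - 2 * (x \<bullet> y) + (norm y)\<^sup>2 / c"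
    using assms unfolding power2_norm_eq_inner
    by (simp add: inner_simps inner_commute field_simps power2_eq_square)
  finally show ?thesis by simp
qed

lemma inner_scaleR_le_sq:
  fixes x y :: "'a::real_inner"
  shows "2 * (a * (x \<bullet> y)) \<le> a\<^sup>2 * (norm x)\<^sup>2 + (norm y)\<^sup>2"
  using inner_le_Young[of 1 "a *\<^sub>R x" y] by (simp add: power_mult_distrib)

lemma inner_scaleR_le_abs:
  fixes x y :: "'a::real_inner"
  shows "2 * (a * (x \<bullet> y)) \<le> \<bar>a\<bar> * ((norm x)\<^sup>2 + (norm y)\<^sup>2)"
proof -
  have "2 * \<bar>x \<bullet> y\<bar> \<le> (norm x)\<^sup>2 + (norm y)\<^sup>2"
    using Cauchy_Schwarz_ineq2[of x y] sum_squares_bound[of "norm x" "norm y"]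
    by (simp add: power2_eq_square)
  then have "\<bar>a\<bar> * (2 * \<bar>x \<bullet> y\<bar>) \<le> \<bar>a\<bar> * ((norm x)\<^sup>2 + (norm y)\<^sup>2)"
    by (rule mult_left_mono) simp
  moreover have "a * (x \<bullet> y) \<le> \<bar>a\<bar> * \<bar>x \<bullet> y\<bar>"
    by (metis abs_ge_self abs_mult)
  ultimately show ?thesis by linarith
qed

lemma norm_add_sq_le:
  fixes x y :: "'a::real_inner"
  shows "(norm (x + y))\<^sup>2 \<le> 2 * (norm x)\<^sup>2 + 2 * (norm y)\<^sup>2"
proof -
  have "0 \<le> (norm (x - y))\<^sup>2" by simp
  then show ?thesis
    by (simp add: power2_norm_eq_inner inner_simps inner_commute algebra_simps)
qed

lemma norm_diff_sq_le:
  fixes x y :: "'a::real_inner"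
  shows "(norm (x - y))\<^sup>2 \<le> 2 * (norm x)\<^sup>2 + 2 * (norm y)\<^sup>2"
  using norm_add_sq_le[of x "- y"] by simp

lemma norm_diff_sq_le_perturbed:
  fixes g g' u u' :: "'a::real_inner"
  shows "(norm (g - g'))\<^sup>2 \<le> 2 * (norm (u - u'))\<^sup>2 + 4 * (norm (g - u))\<^sup>2 + 4 * (norm (g' - u'))\<^sup>2"
proof -
  have "(norm (g - g'))\<^sup>2 \<le> 2 * (norm (u - u'))\<^sup>2 + 2 * (norm ((g - u) - (g' - u')))\<^sup>2"
    using norm_add_sq_le[of "u - u'" "(g - u) - (g' - u')"] by (simp add: algebra_simps)
  then show ?thesis
    using norm_diff_sq_le[of "g - u" "g' - u'"] by linarith
qed

lemma power2_norm_le_of_norm_le: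
  fixes x y :: "'a::real_normed_vector"
  assumes "norm x \<le> L * norm y"
  shows "(norm x)\<^sup>2 \<le> L\<^sup>2 * (norm y)\<^sup>2"
proof -
  have "(norm x)\<^sup>2 \<le> (L * norm y)\<^sup>2"
    using assms by (intro power_mono) auto
  then show ?thesis by (simp add: power_mult_distrib)
qed

section \<open>One deterministic step\<close>

lemma extra_point_projection_estimate:
  fixes w wp zh zn zs gk gp h :: "'a::real_inner"
  assumes proj_next: "(w - \<alpha> *\<^sub>R h + \<gamma> *\<^sub>R (w - wp) - \<tau> *\<^sub>R (gk - gp) - zn) \<bullet> (zs - zn) \<le> 0"
    and proj_half: "(w + \<beta> *\<^sub>R (w - wp) - \<eta> *\<^sub>R gk - zh) \<bullet> (zn - zh) \<le> 0"
  shows "(norm (zn - zs))\<^sup>2 \<le> (norm (w - zs))\<^sup>2 - (norm (zh - w))\<^sup>2 - (norm (zn - zh))\<^sup>2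
      + 2 * (\<alpha> * ((gk - h) \<bullet> (zn - zh))) + 2 * (\<eta> - \<alpha>) * ((zn - zh) \<bullet> gk)
      + 2 * ((\<gamma> - \<beta>) * ((w - wp) \<bullet> (zn - zh))) - 2 * \<alpha> * (h \<bullet> (zh - zs))
      + 2 * (\<gamma> * ((w - wp) \<bullet> (zh - zs))) + 2 * (\<tau> * ((gp - gk) \<bullet> (zn - zs)))"
proof -
  have next_eq: "(norm (zn - zs))\<^sup>2 = (norm (w - zs))\<^sup>2 - (norm (zn - w))\<^sup>2 + 2 * ((zn - w) \<bullet> (zn - zs))"
    by (simp add: power2_norm_eq_inner inner_simps inner_commute algebra_simps)
  have half_eq: "(norm (zn - w))\<^sup>2 = (norm (zh - w))\<^sup>2 + (norm (zn - zh))\<^sup>2 + 2 * ((zh - w) \<bullet> (zn - zh))"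
    by (simp add: power2_norm_eq_inner inner_simps inner_commute algebra_simps)
  have "(zn - w) \<bullet> (zn - zs) \<le> (- \<alpha> *\<^sub>R h + \<gamma> *\<^sub>R (w - wp) - \<tau> *\<^sub>R (gk - gp)) \<bullet> (zn - zs)"
    using proj_next by (simp add: inner_simps inner_commute algebra_simps)
  moreover have "\<beta> * ((w - wp) \<bullet> (zn - zh)) - \<eta> * (gk \<bullet> (zn - zh)) \<le> (zh - w) \<bullet> (zn - zh)"
    using proj_half by (simp add: inner_simps inner_commute algebra_simps)
  moreover have "(- \<alpha> *\<^sub>R h + \<gamma> *\<^sub>R (w - wp) - \<tau> *\<^sub>R (gk - gp)) \<bullet> (zn - zs)
     = \<alpha> * ((gk - h) \<bullet> (zn - zh)) - \<alpha> * (gk \<bullet> (zn - zh)) - \<alpha> * (h \<bullet> (zh - zs))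
       + \<gamma> * ((w - wp) \<bullet> (zn - zh)) + \<gamma> * ((w - wp) \<bullet> (zh - zs)) + \<tau> * ((gp - gk) \<bullet> (zn - zs))"
    by (simp add: inner_simps inner_commute algebra_simps)
  ultimately show ?thesis
    unfolding next_eq half_eq by (simp add: inner_commute algebra_simps)
qed

lemma inner_oracle_half_le:
  fixes zh w gk h Fw Fzh v :: "'a::real_inner"
  assumes lip: "norm (Fzh - Fw) \<le> L * norm (zh - w)"
  shows "2 * (\<alpha> * ((gk - h) \<bullet> v))
    \<le> \<alpha>\<^sup>2 * (2*L\<^sup>2*(norm (zh - w))\<^sup>2 + 4*(norm (h - Fzh))\<^sup>2 + 4*(norm (gk - Fw))\<^sup>2) + (norm v)\<^sup>2"
proof -
  have "(norm (gk - h))\<^sup>2 \<le> 2*L\<^sup>2*(norm (zh - w))\<^sup>2 + 4*(norm (h - Fzh))\<^sup>2 + 4*(norm (gk - Fw))\<^sup>2"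
    using norm_diff_sq_le_perturbed[of h gk Fzh Fw] power2_norm_le_of_norm_le[OF lip]
    by (simp add: norm_minus_commute)
  then show ?thesis
    using inner_scaleR_le_sq[of \<alpha> "gk - h" v] mult_left_mono[of _ _ "\<alpha>\<^sup>2"] by fastforce
qed

lemma inner_noisy_monotone_le:
  fixes zh zs h Fzh w :: "'a::real_inner"
  assumes strong: "\<mu> * (norm (zh - zs))\<^sup>2 \<le> Fzh \<bullet> (zh - zs)" and "0 \<le> \<mu>" "0 \<le> \<alpha>"
  shows "- 2*\<alpha>*(h \<bullet> (zh - zs))
    \<le> -\<alpha>*\<mu>*(norm (w - zs))\<^sup>2 + 2*\<alpha>*\<mu>*(norm (zh - w))\<^sup>2 - 2*\<alpha>*((h - Fzh) \<bullet> (zh - zs))"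
proof -
  have "h \<bullet> (zh - zs) = Fzh \<bullet> (zh - zs) + (h - Fzh) \<bullet> (zh - zs)"
    by (simp add: inner_simps)
  then have "\<mu> * (norm (zh - zs))\<^sup>2 + (h - Fzh) \<bullet> (zh - zs) \<le> h \<bullet> (zh - zs)"
    using strong by simp
  moreover have "\<mu> * (norm (w - zs))\<^sup>2 \<le> \<mu> * (2 * (norm (zh - zs))\<^sup>2 + 2 * (norm (zh - w))\<^sup>2)"
    using norm_diff_sq_le[of "zh - zs" "zh - w"] assms(2) by (intro mult_left_mono) simp_all
  ultimately show ?thesis
    using assms(3) mult_left_mono[of "\<mu> * (norm (zh - zs))\<^sup>2 + (h - Fzh) \<bullet> (zh - zs)" "h \<bullet> (zh - zs)" \<alpha>]
      mult_left_mono[of "\<mu> * (norm (w - zs))\<^sup>2" "\<mu> * (2 * (norm (zh - zs))\<^sup>2 + 2 * (norm (zh - w))\<^sup>2)" \<alpha>]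
    by (simp add: algebra_simps)
qed

lemma inner_oracle_difference_le:
  fixes w wp v zs gk gp Fw Fwp :: "'a::real_inner"
  assumes L: "0 < L" and lip: "norm (Fw - Fwp) \<le> L * norm (w - wp)"
  shows "2 * ((gp - gk) \<bullet> v) \<le> L * (norm v)\<^sup>2 + 4 * L * ((norm (w - zs))\<^sup>2 + (norm (wp - zs))\<^sup>2)
    + 4 * ((norm (gk - Fw))\<^sup>2 + (norm (gp - Fwp))\<^sup>2) / L"
proof -
  have "(norm (gk - gp))\<^sup>2 \<le> 2*L\<^sup>2*(norm (w - wp))\<^sup>2 + 4*(norm (gk - Fw))\<^sup>2 + 4*(norm (gp - Fwp))\<^sup>2"
    using norm_diff_sq_le_perturbed[of gk gp Fw Fwp] power2_norm_le_of_norm_le[OF lip] by simp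
  also have "\<dots> \<le> 4*L\<^sup>2*((norm (w - zs))\<^sup>2 + (norm (wp - zs))\<^sup>2) + 4*(norm (gk - Fw))\<^sup>2 + 4*(norm (gp - Fwp))\<^sup>2"
    using mult_left_mono[OF norm_diff_sq_le[of "w - zs" "wp - zs"], of "2*L\<^sup>2"] by (simp add: algebra_simps)
  finally have "(norm (gk - gp))\<^sup>2 / L
      \<le> (4*L\<^sup>2*((norm (w - zs))\<^sup>2 + (norm (wp - zs))\<^sup>2) + 4*(norm (gk - Fw))\<^sup>2 + 4*(norm (gp - Fwp))\<^sup>2) / L"
    using L by (simp add: divide_right_mono)
  then show ?thesis
    using inner_le_Young[OF L, of v "gp - gk"] L
    by (simp add: inner_commute norm_minus_commute power2_eq_square field_simps)
qed

lemma extra_point_step_estimate: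
  fixes w wp zh zn zs gk gp h Fw Fwp Fzh :: "'a::real_inner"
  assumes proj_next: "(w - \<alpha> *\<^sub>R h + \<gamma> *\<^sub>R (w - wp) - \<tau> *\<^sub>R (gk - gp) - zn) \<bullet> (zs - zn) \<le> 0"
    and proj_half: "(w + \<beta> *\<^sub>R (w - wp) - \<eta> *\<^sub>R gk - zh) \<bullet> (zn - zh) \<le> 0"
    and strong: "\<mu> * (norm (zh - zs))\<^sup>2 \<le> Fzh \<bullet> (zh - zs)"
    and lip_half: "norm (Fzh - Fw) \<le> L * norm (zh - w)"
    and lip_prev: "norm (Fw - Fwp) \<le> L * norm (w - wp)"
    and pos: "0 < L" "0 \<le> \<mu>" "0 \<le> \<alpha>" "0 \<le> \<gamma>" "0 \<le> \<tau>"
  shows "(1 - 4*\<bar>\<gamma>-\<beta>\<bar> - \<tau>*L) * (norm (zn - zs))\<^sup>2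
   \<le> (1 + 4*\<gamma> + 6*\<bar>\<gamma>-\<beta>\<bar> + 4*\<tau>*L - \<alpha>*\<mu>) * (norm (w - zs))\<^sup>2
     + (2*\<bar>\<gamma>-\<beta>\<bar> + 2*\<gamma> + 4*\<tau>*L) * (norm (wp - zs))\<^sup>2
     + (2*\<alpha>\<^sup>2*L\<^sup>2 + 2*\<bar>\<gamma>-\<beta>\<bar> + 2*\<gamma> + 2*\<alpha>*\<mu> - 1) * (norm (zh - w))\<^sup>2
     + 4*\<alpha>\<^sup>2*(norm (h - Fzh))\<^sup>2 + 4*\<alpha>\<^sup>2*(norm (gk - Fw))\<^sup>2
     + 4*(\<tau>/L)*((norm (gk - Fw))\<^sup>2 + (norm (gp - Fwp))\<^sup>2)
     - 2*\<alpha>*((h - Fzh) \<bullet> (zh - zs)) + 2*(\<eta>-\<alpha>)*((zn - zh) \<bullet> gk)"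
proof -
  define N1 N0 Np H Q Zh A where "N1 = (norm (zn - zs))\<^sup>2" and "N0 = (norm (w - zs))\<^sup>2"
    and "Np = (norm (wp - zs))\<^sup>2" and "H = (norm (zh - w))\<^sup>2" and "Q = (norm (zn - zh))\<^sup>2"
    and "Zh = (norm (zh - zs))\<^sup>2" and "A = (norm (gk - Fw))\<^sup>2"
  have W: "(norm (w - wp))\<^sup>2 \<le> 2 * N0 + 2 * Np"
    using norm_diff_sq_le[of "w - zs" "wp - zs"] by (simp add: N0_def Np_def)
  have Q: "Q \<le> 4 * N1 + 4 * N0 + 2 * H"
    using norm_diff_sq_le[of "zn - w" "zh - w"] norm_diff_sq_le[of "zn - zs" "w - zs"]
    by (simp add: Q_def N1_def N0_def H_def)
  have Zh: "Zh \<le> 2 * H + 2 * N0"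
    using norm_add_sq_le[of "zh - w" "w - zs"] by (simp add: Zh_def H_def N0_def)
  have half_step: "2 * (\<alpha> * ((gk - h) \<bullet> (zn - zh))) \<le> \<alpha>\<^sup>2 * (2*L\<^sup>2*H + 4*(norm (h - Fzh))\<^sup>2 + 4*A) + Q"
    using inner_oracle_half_le[OF lip_half, of \<alpha> gk h "zn - zh"] by (simp add: H_def A_def Q_def)
  have momentum: "2 * ((\<gamma> - \<beta>) * ((w - wp) \<bullet> (zn - zh))) \<le> \<bar>\<gamma>-\<beta>\<bar> * (6*N0 + 2*Np + 4*N1 + 2*H)"
    using inner_scaleR_le_abs[of "\<gamma> - \<beta>" "w - wp" "zn - zh"] W Q
      mult_left_mono[of "(norm (w - wp))\<^sup>2 + Q" "6*N0 + 2*Np + 4*N1 + 2*H" "\<bar>\<gamma>-\<beta>\<bar>"]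
    by (simp add: Q_def)
  have monotone: "- 2*\<alpha>*(h \<bullet> (zh - zs)) \<le> -\<alpha>*\<mu>*N0 + 2*\<alpha>*\<mu>*H - 2*\<alpha>*((h - Fzh) \<bullet> (zh - zs))"
    using inner_noisy_monotone_le[OF strong pos(2,3), of h w] by (simp add: N0_def H_def)
  have extrapolation: "2 * (\<gamma> * ((w - wp) \<bullet> (zh - zs))) \<le> \<gamma> * (4*N0 + 2*Np + 2*H)"
    using inner_scaleR_le_abs[of \<gamma> "w - wp" "zh - zs"] W Zh pos
      mult_left_mono[of "(norm (w - wp))\<^sup>2 + Zh" "4*N0 + 2*Np + 2*H" \<gamma>]
    by (simp add: Zh_def)
  have operator_extrapolation: "2 * (\<tau> * ((gp - gk) \<bullet> (zn - zs)))
      \<le> \<tau>*L*N1 + 4*\<tau>*L*N0 + 4*\<tau>*L*Np + 4*(\<tau>/L)*(A + (norm (gp - Fwp))\<^sup>2)"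
    using mult_left_mono[OF inner_oracle_difference_le[OF pos(1) lip_prev, where gk=gk and gp=gp and v="zn - zs" and zs=zs], of \<tau>] pos
    by (simp add: N1_def N0_def Np_def A_def algebra_simps add_divide_distrib)
  have "N1 \<le> N0 - H - Q + (\<alpha>\<^sup>2 * (2*L\<^sup>2*H + 4*(norm (h - Fzh))\<^sup>2 + 4*A) + Q)
       + 2 * (\<eta> - \<alpha>) * ((zn - zh) \<bullet> gk) + \<bar>\<gamma>-\<beta>\<bar> * (6*N0 + 2*Np + 4*N1 + 2*H)
       + (-\<alpha>*\<mu>*N0 + 2*\<alpha>*\<mu>*H - 2*\<alpha>*((h - Fzh) \<bullet> (zh - zs))) + \<gamma> * (4*N0 + 2*Np + 2*H)
       + (\<tau>*L*N1 + 4*\<tau>*L*N0 + 4*\<tau>*L*Np + 4*(\<tau>/L)*(A + (norm (gp - Fwp))\<^sup>2))"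
    using extra_point_projection_estimate[OF proj_next proj_half] half_step momentum monotone
      extrapolation operator_extrapolation
    unfolding N1_def N0_def H_def Q_def by linarith
  then show ?thesis
    unfolding N1_def N0_def Np_def H_def A_def by (simp add: algebra_simps power2_eq_square)
qed

section \<open>Stochastic oracles on an infinite product of samples\<close>

lemma nn_integral_PiM_restrict:
  assumes prob: "prob_space \<Xi>" and J: "finite J"
    and f: "f \<in> borel_measurable (PiM J (\<lambda>_. \<Xi>))"
  shows "(\<integral>\<^sup>+\<omega>. f (restrict \<omega> J) \<partial>PiM UNIV (\<lambda>_::nat. \<Xi>)) = integral\<^sup>N (PiM J (\<lambda>_. \<Xi>)) f"
proof -
  interpret product_prob_space "\<lambda>_::nat. \<Xi>" UNIV
    using prob by (simp add: product_prob_space_def product_prob_space_axioms_def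
        product_sigma_finite_def prob_space_imp_sigma_finite)
  have "(\<integral>\<^sup>+\<omega>. f (restrict \<omega> J) \<partial>PiM UNIV (\<lambda>_. \<Xi>))
      = integral\<^sup>N (distr (PiM UNIV (\<lambda>_. \<Xi>)) (PiM J (\<lambda>_. \<Xi>)) (\<lambda>x. restrict x J)) f"
    by (rule nn_integral_distr[symmetric, OF measurable_restrict_subset]) (simp_all add: f)
  then show ?thesis
    using J by (simp add: distr_PiM_restrict_finite)
qed

lemma nn_integral_PiM_independent_coordinate:
  fixes X :: "(nat \<Rightarrow> 's) \<Rightarrow> 'b" and \<phi> :: "'b \<times> 's \<Rightarrow> ennreal"
  assumes prob: "prob_space \<Xi>" and K: "finite K" "j \<notin> K"
    and X: "X \<in> measurable (PiM K (\<lambda>_. \<Xi>)) N" "\<And>\<omega>. X (restrict \<omega> K) = X \<omega>"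
    and \<phi>: "\<phi> \<in> borel_measurable (N \<Otimes>\<^sub>M \<Xi>)"
  shows "(\<integral>\<^sup>+\<omega>. \<phi> (X \<omega>, \<omega> j) \<partial>PiM UNIV (\<lambda>_. \<Xi>))
       = (\<integral>\<^sup>+\<omega>. (\<integral>\<^sup>+s. \<phi> (X \<omega>, s) \<partial>\<Xi>) \<partial>PiM UNIV (\<lambda>_. \<Xi>))"
proof -
  interpret product_sigma_finite "\<lambda>_::nat. \<Xi>"
    using prob by (simp add: product_sigma_finite_def prob_space_imp_sigma_finite)
  define f where "f x = \<phi> (X (restrict x K), x j)" for x :: "nat \<Rightarrow> 's"
  define G where "G x = (\<integral>\<^sup>+s. \<phi> (X (restrict x K), s) \<partial>\<Xi>)" for x :: "nat \<Rightarrow> 's"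
  have f_meas: "f \<in> borel_measurable (PiM (insert j K) (\<lambda>_. \<Xi>))"
    unfolding f_def using X(1) \<phi> by measurable
  have G_meas: "G \<in> borel_measurable (PiM K (\<lambda>_. \<Xi>))"
    unfolding G_def
  proof (intro sigma_finite_measure.borel_measurable_nn_integral prob_space_imp_sigma_finite prob)
    have "(\<lambda>p. (X (restrict (fst p) K), snd p)) \<in> measurable (PiM K (\<lambda>_. \<Xi>) \<Otimes>\<^sub>M \<Xi>) (N \<Otimes>\<^sub>M \<Xi>)"
      using X(1) by (simp add: X(2))
    from measurable_compose[OF this \<phi>]
    show "(\<lambda>(x, s). \<phi> (X (restrict x K), s)) \<in> borel_measurable (PiM K (\<lambda>_. \<Xi>) \<Otimes>\<^sub>M \<Xi>)"
      by (simp add: case_prod_unfold)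
  qed
  have "(\<integral>\<^sup>+\<omega>. \<phi> (X \<omega>, \<omega> j) \<partial>PiM UNIV (\<lambda>_. \<Xi>))
      = (\<integral>\<^sup>+\<omega>. f (restrict \<omega> (insert j K)) \<partial>PiM UNIV (\<lambda>_. \<Xi>))"
    using K by (intro nn_integral_cong) (simp add: f_def X(2) Int_insert_left)
  also have "\<dots> = integral\<^sup>N (PiM (insert j K) (\<lambda>_. \<Xi>)) f"
    using K f_meas by (simp add: nn_integral_PiM_restrict prob)
  also have "\<dots> = (\<integral>\<^sup>+x. (\<integral>\<^sup>+y. f (x(j := y)) \<partial>\<Xi>) \<partial>PiM K (\<lambda>_. \<Xi>))"
    using K f_meas by (simp add: product_nn_integral_insert)
  also have "\<dots> = integral\<^sup>N (PiM K (\<lambda>_. \<Xi>)) G"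
    using K by (intro nn_integral_cong) (simp add: f_def G_def restrict_upd)
  also have "\<dots> = (\<integral>\<^sup>+\<omega>. G (restrict \<omega> K) \<partial>PiM UNIV (\<lambda>_. \<Xi>))"
    using K G_meas by (simp add: nn_integral_PiM_restrict prob)
  also have "\<dots> = (\<integral>\<^sup>+\<omega>. (\<integral>\<^sup>+s. \<phi> (X \<omega>, s) \<partial>\<Xi>) \<partial>PiM UNIV (\<lambda>_. \<Xi>))"
    by (simp add: G_def X(2))
  finally show ?thesis .
qed

lemma integrable_integral_le_of_nn_integral_le:
  fixes f :: "'b \<Rightarrow> real"
  assumes f: "f \<in> borel_measurable M" "\<And>x. 0 \<le> f x"
    and bound: "(\<integral>\<^sup>+x. ennreal (f x) \<partial>M) \<le> ennreal c" and c: "0 \<le> c"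
  shows "integrable M f" "integral\<^sup>L M f \<le> c"
proof -
  show int: "integrable M f"
    using f bound by (intro integrableI_nonneg) (auto simp: top_unique order.strict_trans1)
  have "ennreal (integral\<^sup>L M f) \<le> ennreal c"
    using bound f by (simp add: nn_integral_eq_integral[OF int])
  then show "integral\<^sup>L M f \<le> c"
    using c by (simp add: ennreal_le_iff)
qed

locale stochastic_oracle =
  fixes Z :: "'a::euclidean_space set" and F :: "'a \<Rightarrow> 'a" and Fh :: "'a \<Rightarrow> 's \<Rightarrow> 'a"
    and \<Xi> :: "'s measure" and \<delta> \<sigma> :: real
  assumes closed: "closed Z" and convex: "convex Z" and nonempty: "Z \<noteq> {}"
    and F_continuous: "continuous_on Z F"
    and prob: "prob_space \<Xi>"
    and Fh_measurable: "(\<lambda>(z, s). Fh z s) \<in> borel_measurable (borel \<Otimes>\<^sub>M \<Xi>)"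
    and noise_nonneg: "0 \<le> \<delta>" "0 \<le> \<sigma>"
    and bias: "\<forall>z\<in>Z. (\<integral>\<^sup>+ s. ennreal (norm (Fh z s - F z)) \<partial>\<Xi>) \<le> ennreal \<delta>"
    and variance: "\<forall>z\<in>Z. (\<integral>\<^sup>+ s. ennreal ((norm (Fh z s - F z))\<^sup>2) \<partial>\<Xi>) \<le> ennreal (\<sigma>\<^sup>2)"
begin

abbreviation "M \<equiv> PiM UNIV (\<lambda>_::nat. \<Xi>)"

lemma prob_space_M: "prob_space M"
  using prob by (intro prob_space_PiM) auto

lemma closest_point_measurable [measurable]: "closest_point Z \<in> borel_measurable borel"
  using closed convex nonempty by (intro borel_measurable_continuous_onI continuous_on_closest_point)

lemma Fh_comp_measurable [measurable]:
  assumes "X \<in> borel_measurable N" "Y \<in> measurable N \<Xi>"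
  shows "(\<lambda>\<omega>. Fh (X \<omega>) (Y \<omega>)) \<in> borel_measurable N"
  using measurable_compose[OF measurable_Pair[OF assms] Fh_measurable] by simp

text \<open>\<open>F\<close> is only continuous on \<open>Z\<close>; composing with the projection extends it measurably.\<close>

lemma oracle_error_measurable:
  "(\<lambda>(x, s). Fh x s - F (closest_point Z x)) \<in> borel_measurable (borel \<Otimes>\<^sub>M \<Xi>)"
proof -
  have "continuous_on UNIV (F \<circ> closest_point Z)"
  proof (intro continuous_on_compose continuous_on_closest_point closed convex nonempty)
    show "continuous_on (range (closest_point Z)) F"
      using closed nonempty closest_point_in_set by (blast intro: continuous_on_subset[OF F_continuous])
  qed
  then have "(\<lambda>x. F (closest_point Z x)) \<in> borel_measurable borel"
    by (auto intro: borel_measurable_continuous_onI simp: comp_def)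
  then show ?thesis
    using Fh_measurable by (simp add: case_prod_unfold) measurable
qed

lemma nn_integral_oracle_error_le:
  fixes \<psi> :: "'a \<Rightarrow> ennreal"
  assumes K: "finite K" "j \<notin> K"
    and X: "X \<in> borel_measurable (PiM K (\<lambda>_. \<Xi>))" "\<And>\<omega>. X (restrict \<omega> K) = X \<omega>" "\<And>\<omega>. X \<omega> \<in> Z"
    and \<psi>: "\<psi> \<in> borel_measurable borel" "\<forall>x\<in>Z. (\<integral>\<^sup>+s. \<psi> (Fh x s - F x) \<partial>\<Xi>) \<le> c"
  shows "(\<integral>\<^sup>+\<omega>. \<psi> (Fh (X \<omega>) (\<omega> j) - F (X \<omega>)) \<partial>M) \<le> c"
proof -
  interpret prob_space M by (rule prob_space_M)
  let ?\<phi> = "\<lambda>(x, s). \<psi> (Fh x s - F (closest_point Z x))"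
  have "?\<phi> \<in> borel_measurable (borel \<Otimes>\<^sub>M \<Xi>)"
    using measurable_compose[OF oracle_error_measurable \<psi>(1)] by (simp add: case_prod_unfold)
  then have "(\<integral>\<^sup>+\<omega>. ?\<phi> (X \<omega>, \<omega> j) \<partial>M) = (\<integral>\<^sup>+\<omega>. (\<integral>\<^sup>+s. ?\<phi> (X \<omega>, s) \<partial>\<Xi>) \<partial>M)"
    by (rule nn_integral_PiM_independent_coordinate[OF prob K X(1,2)])
  also have "\<dots> \<le> (\<integral>\<^sup>+\<omega>. c \<partial>M)"
    using \<psi>(2) X(3) by (intro nn_integral_mono) (simp add: closest_point_self)
  finally show ?thesis
    using X(3) by (simp add: closest_point_self emeasure_space_1)
qed

lemma oracle_error_moments:
  assumes K: "finite K" "j \<notin> K"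
    and X: "X \<in> borel_measurable (PiM K (\<lambda>_. \<Xi>))" "\<And>\<omega>. X (restrict \<omega> K) = X \<omega>" "\<And>\<omega>. X \<omega> \<in> Z"
  defines "e \<equiv> \<lambda>\<omega>. norm (Fh (X \<omega>) (\<omega> j) - F (X \<omega>))"
  shows "integrable M e" "integral\<^sup>L M e \<le> \<delta>"
    and "integrable M (\<lambda>\<omega>. (e \<omega>)\<^sup>2)" "(\<integral>\<omega>. (e \<omega>)\<^sup>2 \<partial>M) \<le> \<sigma>\<^sup>2"
proof -
  have X_M: "X \<in> borel_measurable M"
    using measurable_compose[OF measurable_restrict_subset[of K UNIV] X(1)] by (simp add: X(2))
  have e_meas: "e \<in> borel_measurable M"
    using measurable_compose[OF measurable_Pair[OF X_M measurable_component_singleton] oracle_error_measurable]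
    by (simp add: e_def X(3) closest_point_self)
  have "(\<integral>\<^sup>+\<omega>. ennreal (e \<omega>) \<partial>M) \<le> ennreal \<delta>"
    unfolding e_def by (rule nn_integral_oracle_error_le[OF K X]) (use bias in simp_all)
  from integrable_integral_le_of_nn_integral_le[OF e_meas _ this noise_nonneg(1)]
  show "integrable M e" "integral\<^sup>L M e \<le> \<delta>" by (simp_all add: e_def)
  have "(\<integral>\<^sup>+\<omega>. ennreal ((e \<omega>)\<^sup>2) \<partial>M) \<le> ennreal (\<sigma>\<^sup>2)"
    unfolding e_def by (rule nn_integral_oracle_error_le[OF K X]) (use variance in simp_all)
  from integrable_integral_le_of_nn_integral_le[OF _ _ this] e_meas
  show "integrable M (\<lambda>\<omega>. (e \<omega>)\<^sup>2)" "(\<integral>\<omega>. (e \<omega>)\<^sup>2 \<partial>M) \<le> \<sigma>\<^sup>2" by simp_all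
qed

end

section \<open>The stochastic extra-point scheme\<close>

lemma sep_prev_idx_eq: "sep_prev_idx j = 2 * (j - 1)"
  by (simp add: sep_prev_idx_def)

lemma sep_iter_cong:
  "(\<And>i. i < 2 * j \<Longrightarrow> \<omega> i = \<omega>' i) \<Longrightarrow>
    sep_iter Z Fh \<alpha> \<beta> \<gamma> \<eta> \<tau> z0 \<omega> j = sep_iter Z Fh \<alpha> \<beta> \<gamma> \<eta> \<tau> z0 \<omega>' j"
proof (induction j)
  case (Suc j)
  then have "\<omega> (2 * j) = \<omega>' (2 * j)" "\<omega> (2 * j + 1) = \<omega>' (2 * j + 1)"
    "\<omega> (sep_prev_idx j) = \<omega>' (sep_prev_idx j)"
    by (auto simp: sep_prev_idx_def)
  with Suc show ?case by (simp add: Let_def split: prod.split)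
qed simp

locale extra_point_method = stochastic_oracle +
  fixes D \<mu> L \<alpha> \<beta> \<gamma> \<eta> \<tau> :: real and zstar z0 :: "'a::euclidean_space"
  assumes diameter: "\<forall>z\<in>Z. \<forall>z'\<in>Z. norm (z - z') \<le> D"
    and mu: "0 < \<mu>" "\<mu> \<le> L"
    and strongly_monotone: "\<forall>z\<in>Z. \<forall>z'\<in>Z. (F z - F z') \<bullet> (z - z') \<ge> \<mu> * (norm (z - z'))\<^sup>2"
    and lipschitz: "\<forall>z\<in>Z. \<forall>z'\<in>Z. norm (F z - F z') \<le> L * norm (z - z')"
    and solution: "zstar \<in> Z" "\<forall>z\<in>Z. F zstar \<bullet> (z - zstar) \<ge> 0"
    and params: "\<alpha> \<ge> 0" "\<beta> \<ge> 0" "\<gamma> \<ge> 0" "\<eta> \<ge> 0" "\<tau> \<ge> 0"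
    and start: "z0 \<in> Z"
begin

abbreviation "iter j \<omega> \<equiv> sep_z Z Fh \<alpha> \<beta> \<gamma> \<eta> \<tau> z0 \<omega> j"
abbreviation "iter_prev j \<omega> \<equiv> sep_zprev Z Fh \<alpha> \<beta> \<gamma> \<eta> \<tau> z0 \<omega> j"
abbreviation "iter_half j \<omega> \<equiv> sep_zhalf Z Fh \<alpha> \<beta> \<gamma> \<eta> \<tau> z0 \<omega> j"
abbreviation "Fh_iter j \<omega> \<equiv> Fh (iter j \<omega>) (\<omega> (2 * j))"
abbreviation "Fh_half j \<omega> \<equiv> Fh (iter_half j \<omega>) (\<omega> (2 * j + 1))"

lemma iter_0: "iter 0 \<omega> = z0"
  by (simp add: sep_z_def)

(* At j = 0 the truncated j - 1 = 0 matches the convention z(-1) = z(0). *)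
lemma iter_prev_eq: "iter_prev j \<omega> = iter (j - 1) \<omega>"
  by (cases j) (simp_all add: sep_z_def sep_zprev_def Let_def split: prod.split)

lemma iter_Suc: "iter (Suc j) \<omega> = closest_point Z (iter j \<omega> - \<alpha> *\<^sub>R Fh_half j \<omega>
    + \<gamma> *\<^sub>R (iter j \<omega> - iter (j - 1) \<omega>) - \<tau> *\<^sub>R (Fh_iter j \<omega> - Fh_iter (j - 1) \<omega>))"
  using iter_prev_eq[where j=j and \<omega>=\<omega>, symmetric]
  by (simp add: sep_z_def sep_zprev_def sep_zhalf_def sep_prev_idx_eq Let_def split: prod.split)

lemma iter_half_eq:
  "iter_half j \<omega> = closest_point Z (iter j \<omega> + \<beta> *\<^sub>R (iter j \<omega> - iter (j - 1) \<omega>) - \<eta> *\<^sub>R Fh_iter j \<omega>)"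
  by (simp add: sep_zhalf_def iter_prev_eq Let_def)

lemma iter_in_Z: "iter j \<omega> \<in> Z"
  by (induction j) (simp_all add: iter_0 iter_Suc start closest_point_in_set closed nonempty)

lemma iter_half_in_Z: "iter_half j \<omega> \<in> Z"
  by (simp add: iter_half_eq closest_point_in_set closed nonempty)

lemma iter_cong: "(\<And>i. i < 2 * j \<Longrightarrow> \<omega> i = \<omega>' i) \<Longrightarrow> iter j \<omega> = iter j \<omega>'"
  unfolding sep_z_def by (metis sep_iter_cong)

lemma iter_half_cong: "(\<And>i. i < Suc (2 * j) \<Longrightarrow> \<omega> i = \<omega>' i) \<Longrightarrow> iter_half j \<omega> = iter_half j \<omega>'"
  using iter_cong[where j=j and \<omega>=\<omega> and \<omega>'=\<omega>'] iter_cong[where j="j - 1" and \<omega>=\<omega> and \<omega>'=\<omega>']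
  by (simp add: iter_half_eq)

lemma iter_half_measurable_step:
  assumes "(\<lambda>\<omega>. iter j \<omega>) \<in> borel_measurable (PiM K (\<lambda>_. \<Xi>))"
    and "(\<lambda>\<omega>. iter (j - 1) \<omega>) \<in> borel_measurable (PiM K (\<lambda>_. \<Xi>))" and "2 * j \<in> K"
  shows "(\<lambda>\<omega>. iter_half j \<omega>) \<in> borel_measurable (PiM K (\<lambda>_. \<Xi>))"
  unfolding iter_half_eq
  by (intro measurable_compose[OF _ closest_point_measurable] borel_measurable_add borel_measurable_diff
      borel_measurable_scaleR Fh_comp_measurable measurable_component_singleton assms measurable_const) simp_all

lemma iter_measurable:
  "{..<2 * j} \<subseteq> K \<Longrightarrow> (\<lambda>\<omega>. iter j \<omega>) \<in> borel_measurable (PiM K (\<lambda>_. \<Xi>))"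
proof (induction j rule: less_induct)
  case (less j)
  show ?case
  proof (cases j)
    case (Suc i)
    have IH: "(\<lambda>\<omega>. iter i \<omega>) \<in> borel_measurable (PiM K (\<lambda>_. \<Xi>))"
      "(\<lambda>\<omega>. iter (i - 1) \<omega>) \<in> borel_measurable (PiM K (\<lambda>_. \<Xi>))"
      using less.prems Suc by (auto intro!: less.IH)
    have coords: "2 * i \<in> K" "2 * i + 1 \<in> K" "2 * (i - 1) \<in> K"
      using less.prems Suc by auto
    show ?thesis
      unfolding Suc iter_Suc
      by (intro measurable_compose[OF _ closest_point_measurable] borel_measurable_add borel_measurable_diff
          borel_measurable_scaleR Fh_comp_measurable measurable_component_singleton
          iter_half_measurable_step IH coords measurable_const) simp_all
  qed (simp add: iter_0)
qed

lemma iter_half_measurable: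
  "{..<Suc (2 * j)} \<subseteq> K \<Longrightarrow> (\<lambda>\<omega>. iter_half j \<omega>) \<in> borel_measurable (PiM K (\<lambda>_. \<Xi>))"
  by (intro iter_half_measurable_step iter_measurable) auto

lemma Fh_iter_error_moments:
  fixes j :: nat
  defines "e \<equiv> \<lambda>\<omega>. norm (Fh_iter j \<omega> - F (iter j \<omega>))"
  shows "integrable M e" "integrable M (\<lambda>\<omega>. (e \<omega>)\<^sup>2)" "(\<integral>\<omega>. (e \<omega>)\<^sup>2 \<partial>M) \<le> \<sigma>\<^sup>2"
proof -
  have "iter j (restrict \<omega> {..<2 * j}) = iter j \<omega>" for \<omega>
    by (rule iter_cong) simp
  from oracle_error_moments[OF _ _ iter_measurable this iter_in_Z, of "2 * j"]
  show "integrable M e" "integrable M (\<lambda>\<omega>. (e \<omega>)\<^sup>2)" "(\<integral>\<omega>. (e \<omega>)\<^sup>2 \<partial>M) \<le> \<sigma>\<^sup>2"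
    by (simp_all add: e_def)
qed

lemma Fh_half_error_moments:
  fixes j :: nat
  defines "e \<equiv> \<lambda>\<omega>. norm (Fh_half j \<omega> - F (iter_half j \<omega>))"
  shows "integrable M e" "integral\<^sup>L M e \<le> \<delta>"
    and "integrable M (\<lambda>\<omega>. (e \<omega>)\<^sup>2)" "(\<integral>\<omega>. (e \<omega>)\<^sup>2 \<partial>M) \<le> \<sigma>\<^sup>2"
proof -
  have "iter_half j (restrict \<omega> {..<Suc (2 * j)}) = iter_half j \<omega>" for \<omega>
    by (rule iter_half_cong) simp
  note moments = oracle_error_moments[OF _ _ iter_half_measurable this iter_half_in_Z, of "2 * j + 1"]
  then show "integrable M e" "integral\<^sup>L M e \<le> \<delta>"
    and "integrable M (\<lambda>\<omega>. (e \<omega>)\<^sup>2)" "(\<integral>\<omega>. (e \<omega>)\<^sup>2 \<partial>M) \<le> \<sigma>\<^sup>2"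
    by (simp_all add: e_def)
qed

lemma strong_monotonicity_at_solution:
  assumes "x \<in> Z"
  shows "\<mu> * (norm (x - zstar))\<^sup>2 \<le> F x \<bullet> (x - zstar)"
  using strongly_monotone solution assms by (fastforce simp: inner_diff_left)

lemma iter_step_estimate:
  "(1 - 4 * \<bar>\<gamma> - \<beta>\<bar> - \<tau> * L) * (norm (iter (Suc k) \<omega> - zstar))\<^sup>2
   \<le> (1 + 4 * \<gamma> + 6 * \<bar>\<gamma> - \<beta>\<bar> + 4 * \<tau> * L - \<alpha> * \<mu>) * (norm (iter k \<omega> - zstar))\<^sup>2
     + (2 * \<bar>\<gamma> - \<beta>\<bar> + 2 * \<gamma> + 4 * \<tau> * L) * (norm (iter_prev k \<omega> - zstar))\<^sup>2
     + (2 * \<alpha>\<^sup>2 * L\<^sup>2 + 2 * \<bar>\<gamma> - \<beta>\<bar> + 2 * \<gamma> + 2 * \<alpha> * \<mu> - 1) * (norm (iter_half k \<omega> - iter k \<omega>))\<^sup>2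
     + 4 * \<alpha>\<^sup>2 * (norm (Fh_half k \<omega> - F (iter_half k \<omega>)))\<^sup>2
     + 4 * \<alpha>\<^sup>2 * (norm (Fh_iter k \<omega> - F (iter k \<omega>)))\<^sup>2
     + 4 * (\<tau> / L) * ((norm (Fh_iter k \<omega> - F (iter k \<omega>)))\<^sup>2
        + (norm (Fh_iter (k - 1) \<omega> - F (iter (k - 1) \<omega>)))\<^sup>2)
     + 2 * \<alpha> * D * norm (Fh_half k \<omega> - F (iter_half k \<omega>))
     + 2 * (\<eta> - \<alpha>) * ((iter (Suc k) \<omega> - iter_half k \<omega>) \<bullet> Fh_iter k \<omega>)"
proof -
  have in_Z: "iter (Suc k) \<omega> \<in> Z" "iter k \<omega> \<in> Z" "iter (k - 1) \<omega> \<in> Z" "iter_half k \<omega> \<in> Z"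
    by (simp_all add: iter_in_Z iter_half_in_Z)
  have bias_term: "- (2 * \<alpha> * ((Fh_half k \<omega> - F (iter_half k \<omega>)) \<bullet> (iter_half k \<omega> - zstar)))
      \<le> 2 * \<alpha> * D * norm (Fh_half k \<omega> - F (iter_half k \<omega>))"
  proof -
    have dist: "norm (iter_half k \<omega> - zstar) \<le> D"
      using diameter in_Z(4) solution(1) by blast
    let ?e = "Fh_half k \<omega> - F (iter_half k \<omega>)"
    have "- (?e \<bullet> (iter_half k \<omega> - zstar)) \<le> norm ?e * norm (iter_half k \<omega> - zstar)"
      using Cauchy_Schwarz_ineq2[of ?e "iter_half k \<omega> - zstar"] by (simp only: abs_le_iff)
    also have "\<dots> \<le> norm ?e * D"
      using dist by (rule mult_left_mono) simp
    finally have "- (?e \<bullet> (iter_half k \<omega> - zstar)) \<le> norm ?e * D" .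
    from mult_left_mono[OF this, of "2 * \<alpha>"] params(1) show ?thesis
      by (simp add: algebra_simps)
  qed
  have proj_next: "(iter k \<omega> - \<alpha> *\<^sub>R Fh_half k \<omega> + \<gamma> *\<^sub>R (iter k \<omega> - iter (k - 1) \<omega>)
      - \<tau> *\<^sub>R (Fh_iter k \<omega> - Fh_iter (k - 1) \<omega>) - iter (Suc k) \<omega>) \<bullet> (zstar - iter (Suc k) \<omega>) \<le> 0"
    unfolding iter_Suc using convex closed solution(1) by (rule closest_point_dot)
  have proj_half: "(iter k \<omega> + \<beta> *\<^sub>R (iter k \<omega> - iter (k - 1) \<omega>) - \<eta> *\<^sub>R Fh_iter k \<omega> - iter_half k \<omega>)
      \<bullet> (iter (Suc k) \<omega> - iter_half k \<omega>) \<le> 0"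
    unfolding iter_half_eq using convex closed in_Z(1) by (rule closest_point_dot)
  have lip: "norm (F (iter_half k \<omega>) - F (iter k \<omega>)) \<le> L * norm (iter_half k \<omega> - iter k \<omega>)"
    "norm (F (iter k \<omega>) - F (iter (k - 1) \<omega>)) \<le> L * norm (iter k \<omega> - iter (k - 1) \<omega>)"
    using lipschitz in_Z by blast+
  have pos: "0 < L" "0 \<le> \<mu>"
    using mu by auto
  from extra_point_step_estimate[OF proj_next proj_half strong_monotonicity_at_solution[OF in_Z(4)]
      lip pos params(1,3,5)]
  show ?thesis
    using bias_term unfolding iter_prev_eq by linarith
qed

lemma iter_measurable_M [measurable]: "(\<lambda>\<omega>. iter j \<omega>) \<in> borel_measurable M"
  by (rule iter_measurable) simp

lemma iter_half_measurable_M [measurable]: "(\<lambda>\<omega>. iter_half j \<omega>) \<in> borel_measurable M"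
  by (rule iter_half_measurable) simp

lemma Fh_iter_measurable_M [measurable]: "(\<lambda>\<omega>. Fh_iter j \<omega>) \<in> borel_measurable M"
  by (intro Fh_comp_measurable iter_measurable_M measurable_component_singleton) simp

lemma integrable_dist_sq:
  assumes [measurable]: "X \<in> borel_measurable M" "Y \<in> borel_measurable M"
    and "\<And>\<omega>. X \<omega> \<in> Z" "\<And>\<omega>. Y \<omega> \<in> Z"
  shows "integrable M (\<lambda>\<omega>. (norm (X \<omega> - Y \<omega>))\<^sup>2)"
proof -
  interpret prob_space M by (rule prob_space_M)
  show ?thesis
    using diameter assms(3,4) by (intro integrable_const_bound[where B="D\<^sup>2"]) (auto intro!: power_mono)
qed

lemma diameter_nonneg: "0 \<le> D"
  using diameter start by force

lemma F_norm_le: "x \<in> Z \<Longrightarrow> norm (F x) \<le> norm (F z0) + L * D"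
proof -
  assume x: "x \<in> Z"
  have "norm (F x - F z0) \<le> L * norm (x - z0)"
    using lipschitz x start by blast
  also have "\<dots> \<le> L * D"
    using diameter x start mu by (intro mult_left_mono) auto
  finally show ?thesis
    using norm_triangle_sub[of "F x" "F z0"] by linarith
qed

lemma integrable_inner_Fh_iter:
  "integrable M (\<lambda>\<omega>. (iter (Suc k) \<omega> - iter_half k \<omega>) \<bullet> Fh_iter k \<omega>)"
proof -
  interpret prob_space M by (rule prob_space_M)
  define e where "e \<omega> = norm (Fh_iter k \<omega> - F (iter k \<omega>))" for \<omega>
  define B where "B = norm (F z0) + L * D"
  have e_int: "integrable M e"
    using Fh_iter_error_moments(1)[of k] unfolding e_def[abs_def] .
  have "norm ((iter (Suc k) \<omega> - iter_half k \<omega>) \<bullet> Fh_iter k \<omega>) \<le> D * (e \<omega> + B)" for \<omega>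
  proof -
    have "norm ((iter (Suc k) \<omega> - iter_half k \<omega>) \<bullet> Fh_iter k \<omega>)
        \<le> norm (iter (Suc k) \<omega> - iter_half k \<omega>) * norm (Fh_iter k \<omega>)"
      using Cauchy_Schwarz_ineq2 by simp
    also have "\<dots> \<le> D * (e \<omega> + B)"
    proof (rule mult_mono)
      show "norm (iter (Suc k) \<omega> - iter_half k \<omega>) \<le> D"
        using diameter iter_in_Z iter_half_in_Z by blast
      show "norm (Fh_iter k \<omega>) \<le> e \<omega> + B"
        using norm_triangle_sub[of "Fh_iter k \<omega>" "F (iter k \<omega>)"] F_norm_le[OF iter_in_Z[where j=k and \<omega>=\<omega>]]
        unfolding e_def B_def by linarith
    qed (simp_all add: diameter_nonneg)
    finally show ?thesis .
  qed
  then have bound: "AE \<omega> in M. norm ((iter (Suc k) \<omega> - iter_half k \<omega>) \<bullet> Fh_iter k \<omega>) \<le> norm (D * (e \<omega> + B))"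
    by (intro AE_I2) (smt (verit) real_norm_def)
  have "integrable M (\<lambda>\<omega>. D * (e \<omega> + B))"
    using e_int by simp
  moreover have "(\<lambda>\<omega>. (iter (Suc k) \<omega> - iter_half k \<omega>) \<bullet> Fh_iter k \<omega>) \<in> borel_measurable M"
    by measurable
  ultimately show ?thesis
    using bound by (rule Bochner_Integration.integrable_bound)
qed

lemma expected_iter_step:
  "(1 - 4 * \<bar>\<gamma> - \<beta>\<bar> - \<tau> * L) * (\<integral>\<omega>. (norm (iter (Suc k) \<omega> - zstar))\<^sup>2 \<partial>M)
   \<le> (1 + 4 * \<gamma> + 6 * \<bar>\<gamma> - \<beta>\<bar> + 4 * \<tau> * L - \<alpha> * \<mu>) * (\<integral>\<omega>. (norm (iter k \<omega> - zstar))\<^sup>2 \<partial>M)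
     + (2 * \<bar>\<gamma> - \<beta>\<bar> + 2 * \<gamma> + 4 * \<tau> * L) * (\<integral>\<omega>. (norm (iter_prev k \<omega> - zstar))\<^sup>2 \<partial>M)
     + (2 * \<alpha>\<^sup>2 * L\<^sup>2 + 2 * \<bar>\<gamma> - \<beta>\<bar> + 2 * \<gamma> + 2 * \<alpha> * \<mu> - 1)
         * (\<integral>\<omega>. (norm (iter_half k \<omega> - iter k \<omega>))\<^sup>2 \<partial>M)
     + 8 * (\<alpha>\<^sup>2 + \<tau> / L) * \<sigma>\<^sup>2 + 2 * \<alpha> * \<delta> * D
     + 2 * (\<eta> - \<alpha>) * (\<integral>\<omega>. (iter (Suc k) \<omega> - iter_half k \<omega>) \<bullet> Fh_iter k \<omega> \<partial>M)"
  (is "?c0 * integral\<^sup>L M ?n1 \<le> ?c1 * integral\<^sup>L M ?n0 + ?c2 * _ + ?c3 * integral\<^sup>L M ?hq + _ + _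
        + 2 * (\<eta> - \<alpha>) * integral\<^sup>L M ?e8")
proof -
  let ?np = "\<lambda>\<omega>. (norm (iter (k - 1) \<omega> - zstar))\<^sup>2"
  let ?eh = "\<lambda>\<omega>. norm (Fh_half k \<omega> - F (iter_half k \<omega>))"
  let ?eg = "\<lambda>j \<omega>. norm (Fh_iter j \<omega> - F (iter j \<omega>))"
  have dist_int: "integrable M ?n1" "integrable M ?n0" "integrable M ?np" "integrable M ?hq"
    by (rule integrable_dist_sq;
        simp add: iter_in_Z iter_half_in_Z solution(1) iter_measurable_M iter_half_measurable_M)+
  note eh = Fh_half_error_moments[of k] and eg = Fh_iter_error_moments[of k]
    and eg' = Fh_iter_error_moments[of "k - 1"]
  have "?c0 * integral\<^sup>L M ?n1 = (\<integral>\<omega>. ?c0 * ?n1 \<omega> \<partial>M)"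
    by simp
  also have "\<dots> \<le> (\<integral>\<omega>. ?c1 * ?n0 \<omega> + ?c2 * ?np \<omega> + ?c3 * ?hq \<omega> + 4 * \<alpha>\<^sup>2 * (?eh \<omega>)\<^sup>2
      + 4 * \<alpha>\<^sup>2 * (?eg k \<omega>)\<^sup>2 + 4 * (\<tau> / L) * ((?eg k \<omega>)\<^sup>2 + (?eg (k - 1) \<omega>)\<^sup>2)
      + 2 * \<alpha> * D * ?eh \<omega> + 2 * (\<eta> - \<alpha>) * ?e8 \<omega> \<partial>M)"
    using iter_step_estimate[where k=k] dist_int eh eg eg' integrable_inner_Fh_iter[of k]
    by (intro integral_mono) (simp_all add: iter_prev_eq)
  also have "\<dots> = ?c1 * integral\<^sup>L M ?n0 + ?c2 * integral\<^sup>L M ?np + ?c3 * integral\<^sup>L M ?hq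
      + 4 * \<alpha>\<^sup>2 * (\<integral>\<omega>. (?eh \<omega>)\<^sup>2 \<partial>M) + 4 * \<alpha>\<^sup>2 * (\<integral>\<omega>. (?eg k \<omega>)\<^sup>2 \<partial>M)
      + 4 * (\<tau> / L) * ((\<integral>\<omega>. (?eg k \<omega>)\<^sup>2 \<partial>M) + (\<integral>\<omega>. (?eg (k - 1) \<omega>)\<^sup>2 \<partial>M))
      + 2 * \<alpha> * D * integral\<^sup>L M ?eh + 2 * (\<eta> - \<alpha>) * integral\<^sup>L M ?e8"
    using dist_int eh eg eg' integrable_inner_Fh_iter[of k] by simp
  also have "\<dots> \<le> ?c1 * integral\<^sup>L M ?n0 + ?c2 * integral\<^sup>L M ?np + ?c3 * integral\<^sup>L M ?hq
      + 4 * \<alpha>\<^sup>2 * \<sigma>\<^sup>2 + 4 * \<alpha>\<^sup>2 * \<sigma>\<^sup>2 + 4 * (\<tau> / L) * (\<sigma>\<^sup>2 + \<sigma>\<^sup>2) + 2 * \<alpha> * D * \<delta>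
      + 2 * (\<eta> - \<alpha>) * integral\<^sup>L M ?e8"
    using eh eg eg' params mu diameter_nonneg
    by (intro add_mono order.refl mult_left_mono) simp_all
  finally show ?thesis
    by (simp add: iter_prev_eq algebra_simps)
qed

end

theorem lemma1:
  fixes Z :: "'a::euclidean_space set"
    and F :: "'a \<Rightarrow> 'a"
    and Fh :: "'a \<Rightarrow> 's \<Rightarrow> 'a"
    and \<Xi> :: "'s measure"
    and D \<mu> L \<delta> \<sigma> \<alpha> \<beta> \<gamma> \<eta> \<tau> :: real
    and zstar z0 :: 'a
    and k :: nat
  assumes Z: "closed Z" "convex Z" "Z \<noteq> {}"
    and diam: "\<forall>z\<in>Z. \<forall>z'\<in>Z. norm (z - z') \<le> D"
    and mu: "0 < \<mu>" "\<mu> \<le> L"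
    and strmon: "\<forall>z\<in>Z. \<forall>z'\<in>Z. (F z - F z') \<bullet> (z - z') \<ge> \<mu> * (norm (z - z'))\<^sup>2"
    and lip: "\<forall>z\<in>Z. \<forall>z'\<in>Z. norm (F z - F z') \<le> L * norm (z - z')"
    and zstar: "zstar \<in> Z" "\<forall>z\<in>Z. F zstar \<bullet> (z - zstar) \<ge> 0"
    and prob: "prob_space \<Xi>"
    and Fh_meas: "(\<lambda>(z, s). Fh z s) \<in> borel_measurable (borel \<Otimes>\<^sub>M \<Xi>)"
    and noise: "\<delta> \<ge> 0" "\<sigma> \<ge> 0"
    and bias: "\<forall>z\<in>Z. (\<integral>\<^sup>+ s. ennreal (norm (Fh z s - F z)) \<partial>\<Xi>) \<le> ennreal \<delta>"
    and var: "\<forall>z\<in>Z. (\<integral>\<^sup>+ s. ennreal ((norm (Fh z s - F z))\<^sup>2) \<partial>\<Xi>) \<le> ennreal (\<sigma>\<^sup>2)"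
    and params: "\<alpha> \<ge> 0" "\<beta> \<ge> 0" "\<gamma> \<ge> 0" "\<eta> \<ge> 0" "\<tau> \<ge> 0"
    and z0: "z0 \<in> Z"
  shows
   "(let M = (\<Pi>\<^sub>M i\<in>(UNIV::nat set). \<Xi>);
         z = (\<lambda>j \<omega>. sep_z Z Fh \<alpha> \<beta> \<gamma> \<eta> \<tau> z0 \<omega> j);
         zp = (\<lambda>j \<omega>. sep_zprev Z Fh \<alpha> \<beta> \<gamma> \<eta> \<tau> z0 \<omega> j);
         zh = (\<lambda>j \<omega>. sep_zhalf Z Fh \<alpha> \<beta> \<gamma> \<eta> \<tau> z0 \<omega> j);
         d = (\<lambda>j. \<integral>\<omega>. (norm (z j \<omega> - zstar))\<^sup>2 \<partial>M);
         dprev = (\<integral>\<omega>. (norm (zp k \<omega> - zstar))\<^sup>2 \<partial>M)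
     in (1 - 4 * \<bar>\<gamma> - \<beta>\<bar> - \<tau> * L) * d (Suc k)
        \<le> (1 + 4 * \<gamma> + 6 * \<bar>\<gamma> - \<beta>\<bar> + 4 * \<tau> * L - \<alpha> * \<mu>) * d k
          + (2 * \<bar>\<gamma> - \<beta>\<bar> + 2 * \<gamma> + 4 * \<tau> * L) * dprev
          + (2 * \<alpha>\<^sup>2 * L\<^sup>2 + 2 * \<bar>\<gamma> - \<beta>\<bar> + 2 * \<gamma> + 2 * \<alpha> * \<mu> - 1)
              * (\<integral>\<omega>. (norm (zh k \<omega> - z k \<omega>))\<^sup>2 \<partial>M)
          + 8 * (\<alpha>\<^sup>2 + \<tau> / L) * \<sigma>\<^sup>2 + 2 * \<alpha> * \<delta> * D
          + 2 * (\<eta> - \<alpha>) * (\<integral>\<omega>. (z (Suc k) \<omega> - zh k \<omega>) \<bullet> Fh (z k \<omega>) (\<omega> (2 * k)) \<partial>M))"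
proof -
  have F_continuous: "continuous_on Z F"
    using lip mu by (intro lipschitz_on_continuous_on[of L] lipschitz_onI) (auto simp: dist_norm)
  interpret extra_point_method Z F Fh \<Xi> \<delta> \<sigma> D \<mu> L \<alpha> \<beta> \<gamma> \<eta> \<tau> zstar z0
    by (intro extra_point_method.intro stochastic_oracle.intro extra_point_method_axioms.intro)
      (fact F_continuous assms)+
  show ?thesis
    using expected_iter_step[of k] by (simp add: Let_def)
qed

end
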